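(* Let $N\ge1$, $\varepsilon\in(0,1)$, $U\in C^\infty(\mathbb{R}^d)$ and $G\in C^\infty(\mathbb{R}^d\setminus\{0\})$. On $\mathbf{X}=\mathcal{D}\times(\mathbb{R}^d)^N$ consider the vector fields $X_0=\sum_{i=1}^N\frac{p_i}{\sqrt{1+\varepsilon|p_i|^2}}\partial_{q_i}+\sum_{i=1}^N\Big(-\frac{p_i}{\sqrt{1+\varepsilon|p_i|^2}}-\nabla U(q_i)-\sum_{j\ne i}\nabla G(q_i-q_j)\Big)\partial_{p_i}$ and $X_i=\partial_{p_i}$, $i=1,\dots,N$. Then the Lie algebra generated by the family $\{X_i\}_{i=1}^N$, $\{[X_i,X_j]\}_{i,j=0}^N$, $\{[[X_i,X_j],X_k]\}_{i,j,k=0}^N,\dots$ spans the tangent space $\mathbb{R}^{2dN}$ at every point of $\mathbf{X}$ (Hörmander's condition).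
   Context: $\mathcal{D}=\{\mathbf{q}=(q_1,\dots,q_N)\in(\mathbb{R}^d)^N: q_i\ne q_j\text{ for } i\ne j\}$. These vector fields are those for which the generator of the relativistic Langevin system $dq_i=\frac{p_i}{\sqrt{1+\varepsilon|p_i|^2}}dt$, $dp_i=-\frac{p_i}{\sqrt{1+\varepsilon|p_i|^2}}dt-\nabla U(q_i)dt-\sum_{j\ne i}\nabla G(q_i-q_j)dt+\sqrt2\,dW_i$ is $X_0+\sum_{i=1}^N X_i^2$ (with $X_i^2=\Delta_{p_i}$). *)

theory Defs
  imports "HOL-Analysis.Analysis"
begin

fun Ck_on :: "nat \<Rightarrow> 'a::euclidean_space set \<Rightarrow> ('a \<Rightarrow> 'b::real_normed_vector) \<Rightarrow> bool" where
  "Ck_on 0 S f = continuous_on S f"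
| "Ck_on (Suc k) S f = (f differentiable_on S \<and>
      (\<forall>v. Ck_on k S (\<lambda>x. frechet_derivative f (at x) v)))"

definition smooth_on :: "'a::euclidean_space set \<Rightarrow> ('a \<Rightarrow> 'b::real_normed_vector) \<Rightarrow> bool" where
  "smooth_on S f \<longleftrightarrow> (\<forall>k. Ck_on k S f)"

definition grad :: "('a::euclidean_space \<Rightarrow> real) \<Rightarrow> 'a \<Rightarrow> 'a" where
  "grad f x = (\<Sum>b\<in>Basis. frechet_derivative f (at x) b *\<^sub>R b)"

text \<open>Lie bracket of vector fields [X,Y] = XY - YX (as derivations).\<close>
definition lie_bracket :: "('a::euclidean_space \<Rightarrow> 'a) \<Rightarrow> ('a \<Rightarrow> 'a) \<Rightarrow> 'a \<Rightarrow> 'a" where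
  "lie_bracket X Y x = frechet_derivative Y (at x) (X x) - frechet_derivative X (at x) (Y x)"

inductive_set lie_gen :: "('a::euclidean_space \<Rightarrow> 'a) set \<Rightarrow> ('a \<Rightarrow> 'a) set" for F where
  base: "V \<in> F \<Longrightarrow> V \<in> lie_gen F"
| add: "V \<in> lie_gen F \<Longrightarrow> W \<in> lie_gen F \<Longrightarrow> (\<lambda>x. V x + W x) \<in> lie_gen F"
| scale: "V \<in> lie_gen F \<Longrightarrow> (\<lambda>x. c *\<^sub>R V x) \<in> lie_gen F"
| bracket: "V \<in> lie_gen F \<Longrightarrow> W \<in> lie_gen F \<Longrightarrow> lie_bracket V W \<in> lie_gen F"

text \<open>Left-nested brackets of length n+1 of the generators Gs:
  level 0 = Gs, level (n+1) = [V, X_k] with V at level n.\<close>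
fun nested_brackets :: "nat \<Rightarrow> ('a::euclidean_space \<Rightarrow> 'a) set \<Rightarrow> ('a \<Rightarrow> 'a) set" where
  "nested_brackets 0 Gs = Gs"
| "nested_brackets (Suc n) Gs = {lie_bracket V W | V W. V \<in> nested_brackets n Gs \<and> W \<in> Gs}"

definition hoermander_family :: "('a::euclidean_space \<Rightarrow> 'a) set \<Rightarrow> ('a \<Rightarrow> 'a) \<Rightarrow> ('a \<Rightarrow> 'a) set" where
  "hoermander_family Xs X0 = Xs \<union> (\<Union>n\<in>{1..}. nested_brackets n (insert X0 Xs))"

text \<open>State space: positions q and momenta p, N particles (index type 'n) in R^d.\<close>
type_synonym ('d, 'n) state = "(real^'d^'n) \<times> (real^'d^'n)"

definition config_domain :: "('d::finite, 'n::finite) state set" where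
  "config_domain = {(q, p). \<forall>i j. i \<noteq> j \<longrightarrow> q $ i \<noteq> q $ j}"

definition relvel :: "real \<Rightarrow> real^'d \<Rightarrow> real^'d" where
  "relvel \<epsilon> v = (1 / sqrt (1 + \<epsilon> * (norm v)\<^sup>2)) *\<^sub>R v"

definition drift_field :: "real \<Rightarrow> (real^'d::finite \<Rightarrow> real) \<Rightarrow> (real^'d \<Rightarrow> real)
     \<Rightarrow> ('d, 'n::finite) state \<Rightarrow> ('d, 'n) state" where
  "drift_field \<epsilon> U G z = (case z of (q, p) \<Rightarrow>
     ((\<chi> i. relvel \<epsilon> (p $ i)),
      (\<chi> i. - relvel \<epsilon> (p $ i) - grad U (q $ i)
             - (\<Sum>j\<in>UNIV - {i}. grad G (q $ i - q $ j)))))"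

definition dp_field :: "'n::finite \<Rightarrow> 'd::finite \<Rightarrow> ('d, 'n) state \<Rightarrow> ('d, 'n) state" where
  "dp_field i k z = (0, (\<chi> j. if j = i then axis k 1 else 0))"

end

theory Submission
  imports Defs
begin

text \<open>The coordinate fields \<open>\<partial>\<^sub>p\<^sub>i\<^sub>k\<close> span all momentum directions, and their brackets with
  \<open>X\<^sub>0\<close> at a point \<open>z\<close> are the columns of \<open>DX\<^sub>0(z)\<close> in the momentum directions. The position
  component of such a column is the Jacobian of \<open>p\<^sub>i \<mapsto> p\<^sub>i / sqrt (1 + \<epsilon> |p\<^sub>i|\<^sup>2)\<close>, which
  is invertible; so generators and first brackets already span the whole tangent space.
  Only \<open>\<epsilon> \<ge> 0\<close> and enough regularity of \<open>U\<close> and \<open>G\<close> to make \<open>X\<^sub>0\<close> differentiable are used.\<close>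

lemma has_derivative_vec_lambda:
  assumes "\<And>i. ((\<lambda>x. f x i) has_derivative f' i) (at a within S)"
  shows "((\<lambda>x. (\<chi> i. f x i) :: 'b::euclidean_space^'n) has_derivative (\<lambda>h. \<chi> i. f' i h))
           (at a within S)"
  by (subst has_derivative_componentwise_within)
     (auto simp: Basis_vec_def inner_axis intro!: derivative_eq_intros assms)

lemma differentiable_vec_lambda:
  assumes "\<And>i. (\<lambda>x. f x i) differentiable (at a)"
  shows "(\<lambda>x. (\<chi> i. f x i) :: 'b::euclidean_space^'n) differentiable (at a)"
proof -
  from assms obtain f' where "\<And>i. ((\<lambda>x. f x i) has_derivative f' i) (at a)"
    unfolding differentiable_def by metis
  then show ?thesis
    unfolding differentiable_def by (blast intro: has_derivative_vec_lambda)
qed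

lemma differentiable_grad:
  assumes "Ck_on 2 S f" "open S" "x \<in> S"
  shows "grad f differentiable (at x)"
proof -
  have "(\<lambda>x. frechet_derivative f (at x) b) differentiable_on S" for b
    using assms(1) by (simp add: numeral_2_eq_2)
  then have "(\<lambda>x. frechet_derivative f (at x) b) differentiable (at x)" for b
    using assms(2,3) differentiable_on_eq_differentiable_at by blast
  then show ?thesis
    unfolding grad_def[abs_def] by (intro differentiable_sum differentiable_scaleR) auto
qed

definition lorentz_factor :: "real \<Rightarrow> real^'d \<Rightarrow> real" where
  "lorentz_factor \<epsilon> v = sqrt (1 + \<epsilon> * (norm v)\<^sup>2)"

definition relvel_deriv :: "real \<Rightarrow> real^'d \<Rightarrow> real^'d \<Rightarrow> real^'d" where
  "relvel_deriv \<epsilon> v h =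
     h /\<^sub>R lorentz_factor \<epsilon> v - (\<epsilon> * (v \<bullet> h) / lorentz_factor \<epsilon> v ^ 3) *\<^sub>R v"

lemma lorentz_factor_pos: "0 \<le> \<epsilon> \<Longrightarrow> 0 < lorentz_factor \<epsilon> v"
  by (simp add: lorentz_factor_def add_pos_nonneg)

lemma has_derivative_relvel:
  assumes "0 \<le> \<epsilon>"
  shows "(relvel \<epsilon> has_derivative relvel_deriv \<epsilon> v) (at v)"
proof -
  have sq: "sqrt (1 + \<epsilon> * (v \<bullet> v)) = lorentz_factor \<epsilon> v"
    by (simp add: lorentz_factor_def power2_norm_eq_inner)
  have pos: "0 < 1 + \<epsilon> * (v \<bullet> v)"
    using assms by (simp add: add_pos_nonneg)
  have relvel_eq: "relvel \<epsilon> = (\<lambda>v. (1 / sqrt (1 + \<epsilon> * (v \<bullet> v))) *\<^sub>R v)"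
    by (simp add: fun_eq_iff relvel_def power2_norm_eq_inner)
  show ?thesis
    unfolding relvel_eq using pos lorentz_factor_pos[OF assms, of v]
    by (auto intro!: derivative_eq_intros
        simp: sq fun_eq_iff relvel_deriv_def field_simps power3_eq_cube inner_commute)
qed

lemma relvel_deriv_right_inverse:
  fixes v u :: "real^'d"
  assumes "0 \<le> \<epsilon>"
  defines "s \<equiv> lorentz_factor \<epsilon> v"
  shows "relvel_deriv \<epsilon> v (s *\<^sub>R u + (\<epsilon> * s * (v \<bullet> u)) *\<^sub>R v) = u"
proof -
  have "s\<^sup>2 = 1 + \<epsilon> * (v \<bullet> v)"
    using assms by (simp add: s_def lorentz_factor_def power2_norm_eq_inner add_nonneg_nonneg)
  then have "v \<bullet> (s *\<^sub>R u + (\<epsilon> * s * (v \<bullet> u)) *\<^sub>R v) = s ^ 3 * (v \<bullet> u)"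
    by (simp add: inner_add_right power3_eq_cube power2_eq_square algebra_simps)
  moreover have "0 < s"
    using lorentz_factor_pos[OF assms(1)] by (simp add: s_def)
  ultimately show ?thesis
    by (simp add: relvel_deriv_def s_def[symmetric] algebra_simps)
qed

lemma drift_field_eq:
  "drift_field \<epsilon> U G = (\<lambda>z. ((\<chi> i. relvel \<epsilon> (snd z $ i)),
     (\<chi> i. - relvel \<epsilon> (snd z $ i) - grad U (fst z $ i)
            - (\<Sum>j\<in>UNIV - {i}. grad G (fst z $ i - fst z $ j)))))"
  by (auto simp: drift_field_def fun_eq_iff split: prod.split)

lemma drift_field_differentiable:
  fixes U G :: "real^'d::finite \<Rightarrow> real" and z :: "('d, 'n::finite) state"
  assumes "0 \<le> \<epsilon>" "Ck_on 2 UNIV U" "Ck_on 2 (- {0}) G" "z \<in> config_domain"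
  shows "drift_field \<epsilon> U G differentiable (at z)"
proof -
  have coord: "(\<lambda>z::('d, 'n) state. fst z $ i) differentiable (at w)"
    "(\<lambda>z::('d, 'n) state. snd z $ i) differentiable (at w)" for i w
    by (simp_all add: bounded_linear_imp_differentiable bounded_linear_fst bounded_linear_snd
        bounded_linear_compose[OF bounded_linear_vec_nth])
  have "(\<lambda>z::('d, 'n) state. relvel \<epsilon> (snd z $ i)) differentiable (at w)" for i w
    using differentiable_chain_at[OF coord(2) differentiableI[OF has_derivative_relvel[OF assms(1)]]]
    by (simp add: o_def)
  moreover have "(\<lambda>z::('d, 'n) state. grad U (fst z $ i)) differentiable (at w)" for i w
    using differentiable_chain_at[OF coord(1) differentiable_grad[OF assms(2)]]
    by (simp add: o_def)
  moreover have "(\<lambda>z::('d, 'n) state. grad G (fst z $ i - fst z $ j)) differentiable (at z)"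
    if "j \<noteq> i" for i j
  proof -
    have "fst z $ i - fst z $ j \<in> - {0}"
      using assms(4) that by (auto simp: config_domain_def split: prod.splits)
    then show ?thesis
      using differentiable_chain_at[OF differentiable_diff[OF coord(1) coord(1)]
          differentiable_grad[OF assms(3)]]
      by (simp add: o_def open_Compl)
  qed
  ultimately show ?thesis
    unfolding drift_field_eq
    by (intro differentiable_Pair differentiable_vec_lambda differentiable_diff differentiable_minus
        differentiable_sum) auto
qed

lemma fst_frechet_derivative_drift_field:
  assumes "0 \<le> \<epsilon>" "drift_field \<epsilon> U G differentiable (at (q, p))"
  shows "fst (frechet_derivative (drift_field \<epsilon> U G) (at (q, p)) h) =
           (\<chi> i. relvel_deriv \<epsilon> (p $ i) (snd h $ i))"
proof -
  have "((\<lambda>z. fst (drift_field \<epsilon> U G z)) has_derivative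
          (\<lambda>h. fst (frechet_derivative (drift_field \<epsilon> U G) (at (q, p)) h))) (at (q, p))"
    using assms(2) by (intro has_derivative_fst) (simp add: frechet_derivative_works[symmetric])
  moreover have "((\<lambda>z. relvel \<epsilon> (snd z $ i)) has_derivative
                   (\<lambda>h. relvel_deriv \<epsilon> (p $ i) (snd h $ i))) (at (q, p))" for i
  proof -
    have "((\<lambda>z. snd z $ i) has_derivative (\<lambda>h. snd h $ i)) (at (q, p))"
      by (rule bounded_linear_imp_has_derivative[OF
            bounded_linear_compose[OF bounded_linear_vec_nth bounded_linear_snd]])
    from has_derivative_compose[OF this has_derivative_relvel[OF assms(1)]] show ?thesis
      by simp
  qed
  then have "((\<lambda>z. fst (drift_field \<epsilon> U G z)) has_derivative
               (\<lambda>h. \<chi> i. relvel_deriv \<epsilon> (p $ i) (snd h $ i))) (at (q, p))"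
    unfolding drift_field_eq fst_conv by (rule has_derivative_vec_lambda)
  ultimately show ?thesis
    by (rule has_derivative_unique[THEN fun_cong])
qed

lemma dp_field_eq: "dp_field i k = (\<lambda>_. (0, axis i (axis k 1)))"
  by (simp add: fun_eq_iff dp_field_def axis_def)

lemma lie_bracket_const_left: "lie_bracket (\<lambda>_. c) Y x = frechet_derivative Y (at x) c"
  by (simp add: lie_bracket_def)

lemma Basis_vec_vec: "(Basis :: (real^'d^'n) set) = {axis i (axis k 1) | i k. True}"
  by (auto simp: Basis_vec_def dest: axis_inverse)

lemma linear_image_in_subspace:
  assumes "linear f" "subspace S" "f ` Basis \<subseteq> S"
  shows "f w \<in> S"
proof -
  have "span Basis \<subseteq> f -` S"
    using assms by (intro span_minimal linear_subspace_vimage) auto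
  then show ?thesis by auto
qed

lemma hoermander_family_generator: "X \<in> Xs \<Longrightarrow> X \<in> hoermander_family Xs X0"
  by (simp add: hoermander_family_def)

lemma hoermander_family_bracket_drift:
  "X \<in> Xs \<Longrightarrow> lie_bracket X X0 \<in> hoermander_family Xs X0"
  unfolding hoermander_family_def by (intro UnI2 UN_I[of 1]) auto

lemma span_hoermander_dp_fields:
  fixes X0 :: "('d::finite, 'n::finite) state \<Rightarrow> ('d, 'n) state"
  assumes "X0 differentiable (at z)"
  defines "S \<equiv> span {V z | V. V \<in> lie_gen (hoermander_family {dp_field i k | i k. True} X0)}"
  shows "(0, w) \<in> S" and "frechet_derivative X0 (at z) (0, w) \<in> S"
proof -
  have in_S: "V z \<in> S" if "V \<in> hoermander_family {dp_field i k | i k. True} X0" for V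
    using that unfolding S_def by (auto intro: span_base lie_gen.base)
  have "dp_field i k z \<in> S" "lie_bracket (dp_field i k) X0 z \<in> S" for i k
    by (blast intro: in_S hoermander_family_generator hoermander_family_bracket_drift)+
  then have basis_in_S: "(0, axis i (axis k 1)) \<in> S"
    "frechet_derivative X0 (at z) (0, axis i (axis k 1)) \<in> S" for i k
    by (simp_all add: dp_field_eq lie_bracket_const_left)
  have linear_vertical: "linear (\<lambda>w::real^'d^'n. (0::real^'d^'n, w))"
    by (rule linearI) (auto simp: zero_prod_def)
  show "(0, w) \<in> S"
    using basis_in_S by (intro linear_image_in_subspace[OF linear_vertical]) (auto simp: S_def Basis_vec_vec)
  show "frechet_derivative X0 (at z) (0, w) \<in> S"
    using basis_in_S
    by (intro linear_image_in_subspace[OF linear_compose[OF linear_vertical linear_frechet_derivative[OF assms(1)]],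
          unfolded o_def])
       (auto simp: S_def Basis_vec_vec)
qed

lemma subspace_prod_eq_UNIV:
  fixes S :: "('a::real_vector \<times> 'b::real_vector) set"
  assumes "subspace S" "\<And>w. (0, w) \<in> S" "\<And>w. L w \<in> S" "surj (\<lambda>w. fst (L w))"
  shows "S = UNIV"
proof -
  have "(a, b) \<in> S" for a b
  proof -
    obtain w where "fst (L w) = a"
      using assms(4) by (metis surjD)
    then have "(a, b) = L w + (0, b - snd (L w))"
      by (simp add: prod_eq_iff)
    then show ?thesis
      using subspace_add[OF assms(1) assms(3) assms(2)] by metis
  qed
  then show ?thesis by auto
qed

theorem lemma3p6:
  fixes \<epsilon> :: real
    and U :: "real^'d::finite \<Rightarrow> real"
    and G :: "real^'d \<Rightarrow> real"
  assumes "0 < \<epsilon>" and "\<epsilon> < 1"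
    and "smooth_on UNIV U"
    and "smooth_on (- {0}) G"
  shows "\<forall>z \<in> (config_domain :: ('d, 'n::finite) state set).
           span {V z | V. V \<in> lie_gen (hoermander_family
                     {dp_field i k | (i::'n) (k::'d). True}
                     (drift_field \<epsilon> U G))} = UNIV"
proof (intro ballI)
  fix z :: "('d, 'n) state"
  assume "z \<in> config_domain"
  moreover obtain q p where z: "z = (q, p)" by fastforce
  moreover have "Ck_on 2 UNIV U" "Ck_on 2 (- {0}) G"
    using assms(3,4) by (simp_all add: smooth_on_def)
  ultimately have diff: "drift_field \<epsilon> U G differentiable (at (q, p))"
    using assms(1) by (simp add: drift_field_differentiable)
  let ?s = "\<lambda>i. lorentz_factor \<epsilon> (p $ i)"
  have "surj (\<lambda>w. fst (frechet_derivative (drift_field \<epsilon> U G) (at (q, p)) (0, w)))"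
  proof (rule surjI)
    fix a :: "real^'d^'n"
    show "fst (frechet_derivative (drift_field \<epsilon> U G) (at (q, p))
            (0, \<chi> i. ?s i *\<^sub>R a $ i + (\<epsilon> * ?s i * (p $ i \<bullet> a $ i)) *\<^sub>R p $ i)) = a"
      using assms(1) diff
      by (simp add: fst_frechet_derivative_drift_field relvel_deriv_right_inverse vec_eq_iff)
  qed
  then show "span {V z | V. V \<in> lie_gen (hoermander_family {dp_field i k | i k. True}
               (drift_field \<epsilon> U G))} = UNIV"
    unfolding z by (rule subspace_prod_eq_UNIV[OF subspace_span span_hoermander_dp_fields[OF diff]])
qed

end
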